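(* Let $\vec\sigma$ be a preference profile, $d$ a pseudometric consistent with $\vec\sigma$, $X\in\mathcal A$, and $w_X$ an $X$-truncated weight function for $\vec\sigma$ with $\sum_{Y}w_X^+(Y)d(X,Y)>0$. Suppose $\mathrm{SC}(X,d)\le D\cdot\min_{Z\in\mathcal A}\mathrm{SC}(Z,d)$. Then for every probability distribution $p$ over $\mathcal A$, $$\frac{\mathbb E_{Y\sim p}[\mathrm{SC}(Y,d)]}{\min_{Z\in\mathcal A}\mathrm{SC}(Z,d)}\le D\left(1+\frac{2n\sum_{Y\in\mathcal A}p(Y)\,d(X,Y)}{\sum_{Y\in\mathcal A}w_X^+(Y)\,d(X,Y)}\right).$$
   Context: Setting: $n$ agents $\mathcal N$, $m$ alternatives $\mathcal A$, each agent $i$ with a strict ranking; $X\succ_iY$ means $i$ ranks $X$ above $Y$, and $Y\succeq_iX$ means $Y\succ_iX$ or $Y=X$. A pseudometric $d$ on $\mathcal N\cup\mathcal A$ is consistent with $\vec\sigma$ if $X\succ_iY\Rightarrow d(i,X)\le d(i,Y)$; $\mathrm{SC}(X,d)=\sum_{i}d(i,X)$. An $X$-truncated weight function is $w:\mathcal N\times\mathcal A\to[0,1]$ such that for every agent $i$: $w(i,Y)=0$ whenever $X\succ_iY$, and $\sum_{Y:\,Y\succeq_iX}w(i,Y)=1$. Write $w^+(Y)=\sum_{i\in\mathcal N}w(i,Y)$. *)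

theory Defs
  imports Complex_Main
begin

text \<open>Agents have type 'n, alternatives type 'a; the metric space is 'n + 'a,
 agent i is Inl i, alternative X is Inr X. pref i X Y means X \<succ>_i Y.\<close>

definition strict_ranking :: "'a set \<Rightarrow> ('a \<Rightarrow> 'a \<Rightarrow> bool) \<Rightarrow> bool" where
  "strict_ranking A r \<longleftrightarrow>
     (\<forall>X\<in>A. \<not> r X X) \<and>
     (\<forall>X\<in>A. \<forall>Y\<in>A. \<forall>Z\<in>A. r X Y \<longrightarrow> r Y Z \<longrightarrow> r X Z) \<and>
     (\<forall>X\<in>A. \<forall>Y\<in>A. X \<noteq> Y \<longrightarrow> r X Y \<or> r Y X)"

definition preference_profile ::
  "'n set \<Rightarrow> 'a set \<Rightarrow> ('n \<Rightarrow> 'a \<Rightarrow> 'a \<Rightarrow> bool) \<Rightarrow> bool" where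
  "preference_profile N A pref \<longleftrightarrow> (\<forall>i\<in>N. strict_ranking A (pref i))"

definition pseudometric_on :: "'p set \<Rightarrow> ('p \<Rightarrow> 'p \<Rightarrow> real) \<Rightarrow> bool" where
  "pseudometric_on S d \<longleftrightarrow>
     (\<forall>x\<in>S. d x x = 0) \<and>
     (\<forall>x\<in>S. \<forall>y\<in>S. 0 \<le> d x y \<and> d x y = d y x) \<and>
     (\<forall>x\<in>S. \<forall>y\<in>S. \<forall>z\<in>S. d x z \<le> d x y + d y z)"

definition consistent ::
  "'n set \<Rightarrow> 'a set \<Rightarrow> ('n \<Rightarrow> 'a \<Rightarrow> 'a \<Rightarrow> bool) \<Rightarrow> ('n + 'a \<Rightarrow> 'n + 'a \<Rightarrow> real) \<Rightarrow> bool" where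
  "consistent N A pref d \<longleftrightarrow>
     pseudometric_on (Inl ` N \<union> Inr ` A) d \<and>
     (\<forall>i\<in>N. \<forall>X\<in>A. \<forall>Y\<in>A. pref i X Y \<longrightarrow> d (Inl i) (Inr X) \<le> d (Inl i) (Inr Y))"

definition SC :: "'n set \<Rightarrow> ('n + 'a \<Rightarrow> 'n + 'a \<Rightarrow> real) \<Rightarrow> 'a \<Rightarrow> real" where
  "SC N d X = (\<Sum>i\<in>N. d (Inl i) (Inr X))"

definition truncated_weight ::
  "'n set \<Rightarrow> 'a set \<Rightarrow> ('n \<Rightarrow> 'a \<Rightarrow> 'a \<Rightarrow> bool) \<Rightarrow> 'a \<Rightarrow> ('n \<Rightarrow> 'a \<Rightarrow> real) \<Rightarrow> bool" where
  "truncated_weight N A pref X w \<longleftrightarrow>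
     (\<forall>i\<in>N. \<forall>Y\<in>A. 0 \<le> w i Y \<and> w i Y \<le> 1) \<and>
     (\<forall>i\<in>N. \<forall>Y\<in>A. pref i X Y \<longrightarrow> w i Y = 0) \<and>
     (\<forall>i\<in>N. (\<Sum>Y\<in>{Y\<in>A. pref i Y X \<or> Y = X}. w i Y) = 1)"

definition wplus :: "'n set \<Rightarrow> ('n \<Rightarrow> 'a \<Rightarrow> real) \<Rightarrow> 'a \<Rightarrow> real" where
  "wplus N w Y = (\<Sum>i\<in>N. w i Y)"

definition distribution_on :: "'a set \<Rightarrow> ('a \<Rightarrow> real) \<Rightarrow> bool" where
  "distribution_on A p \<longleftrightarrow> (\<forall>Y\<in>A. 0 \<le> p Y) \<and> (\<Sum>Y\<in>A. p Y) = 1"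

end

theory Submission
  imports Defs
begin

text \<open>Every agent i puts its unit weight only on alternatives Y it ranks at least as high as X,
  and for such Y the triangle inequality through i gives d(X,Y) \<le> d(X,i) + d(i,Y) \<le> 2 d(i,X).
  Hence \<Sum>Y w+(Y) d(X,Y) \<le> 2 SC(X). On the other hand, the triangle inequality through X gives
  SC(Y) \<le> SC(X) + n d(X,Y), so the expected social cost under p is at most
  SC(X) + n \<Sum>Y p(Y) d(X,Y) \<le> SC(X) (1 + 2n \<Sum>Y p(Y) d(X,Y) / \<Sum>Y w+(Y) d(X,Y)),
  and SC(X) \<le> D \<cdot> min SC finishes the argument.\<close>

lemma pseudometric_on_nonneg:
  "pseudometric_on S d \<Longrightarrow> x \<in> S \<Longrightarrow> y \<in> S \<Longrightarrow> 0 \<le> d x y"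
  unfolding pseudometric_on_def by blast

lemma pseudometric_on_sym:
  "pseudometric_on S d \<Longrightarrow> x \<in> S \<Longrightarrow> y \<in> S \<Longrightarrow> d x y = d y x"
  unfolding pseudometric_on_def by blast

lemma pseudometric_on_triangle:
  "pseudometric_on S d \<Longrightarrow> x \<in> S \<Longrightarrow> y \<in> S \<Longrightarrow> z \<in> S \<Longrightarrow> d x z \<le> d x y + d y z"
  unfolding pseudometric_on_def by blast

lemma SC_nonneg:
  assumes "consistent N A pref d" and "Y \<in> A"
  shows "0 \<le> SC N d Y"
  using assms unfolding consistent_def SC_def
  by (intro sum_nonneg) (auto intro: pseudometric_on_nonneg)

lemma truncated_weight_sum_eq_1:
  assumes "finite A" and "preference_profile N A pref" and "X \<in> A"
    and "truncated_weight N A pref X w" and "i \<in> N"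
  shows "(\<Sum>Y\<in>A. w i Y) = 1"
proof -
  have total: "Y \<in> A \<Longrightarrow> Y \<noteq> X \<Longrightarrow> pref i Y X \<or> pref i X Y" for Y
    using assms(2,3,5) unfolding preference_profile_def strict_ranking_def by blast
  have "(\<Sum>Y\<in>{Y\<in>A. pref i Y X \<or> Y = X}. w i Y) = (\<Sum>Y\<in>A. w i Y)"
    using assms(4,5) total unfolding truncated_weight_def
    by (intro sum.mono_neutral_left[OF assms(1)]) blast+
  then show ?thesis
    using assms(4,5) unfolding truncated_weight_def by simp
qed

lemma consistent_dist_le_twice_agent_dist:
  assumes "consistent N A pref d" and "i \<in> N" and "X \<in> A" and "Y \<in> A"
    and "pref i Y X \<or> Y = X"
  shows "d (Inr X) (Inr Y) \<le> 2 * d (Inl i) (Inr X)"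
proof -
  let ?S = "Inl ` N \<union> Inr ` A"
  have pm: "pseudometric_on ?S d"
    using assms(1) unfolding consistent_def by blast
  have closer: "d (Inl i) (Inr Y) \<le> d (Inl i) (Inr X)"
    using assms unfolding consistent_def by auto
  have "d (Inr X) (Inr Y) \<le> d (Inr X) (Inl i) + d (Inl i) (Inr Y)"
    using assms(2-4) by (intro pseudometric_on_triangle[OF pm]) auto
  moreover have "d (Inr X) (Inl i) = d (Inl i) (Inr X)"
    using assms(2,3) by (intro pseudometric_on_sym[OF pm]) auto
  ultimately show ?thesis
    using closer by linarith
qed

lemma weighted_dist_le_twice_SC:
  assumes "finite A" and "preference_profile N A pref" and "consistent N A pref d"
    and "X \<in> A" and "truncated_weight N A pref X w"
  shows "(\<Sum>Y\<in>A. wplus N w Y * d (Inr X) (Inr Y)) \<le> 2 * SC N d X"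
proof -
  have term_le: "w i Y * d (Inr X) (Inr Y) \<le> w i Y * (2 * d (Inl i) (Inr X))"
    if "i \<in> N" and "Y \<in> A" for i Y
  proof (cases "pref i X Y")
    case True
    then show ?thesis
      using assms(5) that unfolding truncated_weight_def by simp
  next
    case False
    then have "pref i Y X \<or> Y = X"
      using assms(2,4) that unfolding preference_profile_def strict_ranking_def by blast
    then show ?thesis
      using assms(5) that unfolding truncated_weight_def
      by (intro mult_left_mono consistent_dist_le_twice_agent_dist[OF assms(3)])
         (auto simp: assms(4))
  qed
  have "(\<Sum>Y\<in>A. wplus N w Y * d (Inr X) (Inr Y))
        = (\<Sum>i\<in>N. \<Sum>Y\<in>A. w i Y * d (Inr X) (Inr Y))"
    unfolding wplus_def by (simp add: sum_distrib_right sum.swap[of _ A N])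
  also have "\<dots> \<le> (\<Sum>i\<in>N. \<Sum>Y\<in>A. w i Y * (2 * d (Inl i) (Inr X)))"
    by (intro sum_mono term_le)
  also have "\<dots> = (\<Sum>i\<in>N. 2 * d (Inl i) (Inr X))"
    using truncated_weight_sum_eq_1[OF assms(1,2,4,5)]
    by (simp add: sum_distrib_right[symmetric])
  also have "\<dots> = 2 * SC N d X"
    unfolding SC_def by (simp add: sum_distrib_left)
  finally show ?thesis .
qed

lemma SC_le_SC_plus_dist:
  assumes "consistent N A pref d" and "X \<in> A" and "Y \<in> A"
  shows "SC N d Y \<le> SC N d X + real (card N) * d (Inr X) (Inr Y)"
proof -
  have pm: "pseudometric_on (Inl ` N \<union> Inr ` A) d"
    using assms(1) unfolding consistent_def by blast
  have "SC N d Y \<le> (\<Sum>i\<in>N. d (Inl i) (Inr X) + d (Inr X) (Inr Y))"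
    unfolding SC_def using assms(2,3)
    by (intro sum_mono pseudometric_on_triangle[OF pm]) auto
  then show ?thesis
    unfolding SC_def by (simp add: sum.distrib)
qed

lemma expected_SC_le:
  assumes "consistent N A pref d" and "X \<in> A" and "distribution_on A p"
  shows "(\<Sum>Y\<in>A. p Y * SC N d Y)
         \<le> SC N d X + real (card N) * (\<Sum>Y\<in>A. p Y * d (Inr X) (Inr Y))"
proof -
  have p_nonneg: "Y \<in> A \<Longrightarrow> 0 \<le> p Y" and p_sum: "(\<Sum>Y\<in>A. p Y) = 1" for Y
    using assms(3) unfolding distribution_on_def by auto
  have "(\<Sum>Y\<in>A. p Y * SC N d Y)
        \<le> (\<Sum>Y\<in>A. p Y * (SC N d X + real (card N) * d (Inr X) (Inr Y)))"
    by (intro sum_mono mult_left_mono SC_le_SC_plus_dist[OF assms(1,2)] p_nonneg)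
  also have "\<dots> = SC N d X + real (card N) * (\<Sum>Y\<in>A. p Y * d (Inr X) (Inr Y))"
    by (simp add: algebra_simps sum.distrib sum_distrib_left sum_distrib_right[symmetric] p_sum)
  finally show ?thesis .
qed

lemma ratio_bound_from_cost_bounds:
  fixes a s n e W D M :: real
  assumes "a \<le> s + n * e" and "0 \<le> n * e" and "0 < W" and "W \<le> 2 * s"
    and "s \<le> D * M" and "0 \<le> M"
  shows "a / M \<le> D * (1 + 2 * n * e / W)"
proof -
  have "0 < s" using assms(3,4) by linarith
  then have M_pos: "0 < M" using assms(5,6) by (cases "M = 0") auto
  have "n * e * W \<le> n * e * (2 * s)"
    using assms(2,4) by (intro mult_left_mono)
  then have "n * e \<le> s * (2 * n * e / W)"
    using assms(3) by (simp add: field_simps)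
  then have "a \<le> s * (1 + 2 * n * e / W)"
    using assms(1) by (simp add: algebra_simps)
  also have "\<dots> \<le> D * M * (1 + 2 * n * e / W)"
    using assms(2,3,5) by (intro mult_right_mono) (auto simp: mult.assoc)
  finally show ?thesis
    using M_pos by (simp add: divide_le_eq algebra_simps)
qed

theorem mainTheorem6:
  fixes N :: "'n set" and A :: "'a set"
    and pref :: "'n \<Rightarrow> 'a \<Rightarrow> 'a \<Rightarrow> bool"
    and d :: "'n + 'a \<Rightarrow> 'n + 'a \<Rightarrow> real"
    and X :: 'a and w :: "'n \<Rightarrow> 'a \<Rightarrow> real" and D :: real
    and p :: "'a \<Rightarrow> real"
  assumes "finite N" and "finite A" and "A \<noteq> {}"
    and "preference_profile N A pref"
    and "consistent N A pref d"
    and "X \<in> A"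
    and "truncated_weight N A pref X w"
    and "(\<Sum>Y\<in>A. wplus N w Y * d (Inr X) (Inr Y)) > 0"
    and "SC N d X \<le> D * Min (SC N d ` A)"
    and "distribution_on A p"
  shows "(\<Sum>Y\<in>A. p Y * SC N d Y) / Min (SC N d ` A)
         \<le> D * (1 + 2 * real (card N) * (\<Sum>Y\<in>A. p Y * d (Inr X) (Inr Y))
                    / (\<Sum>Y\<in>A. wplus N w Y * d (Inr X) (Inr Y)))"
proof (rule ratio_bound_from_cost_bounds)
  show "(\<Sum>Y\<in>A. p Y * SC N d Y)
        \<le> SC N d X + real (card N) * (\<Sum>Y\<in>A. p Y * d (Inr X) (Inr Y))"
    using assms(5,6,10) by (rule expected_SC_le)
  show "0 \<le> real (card N) * (\<Sum>Y\<in>A. p Y * d (Inr X) (Inr Y))"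
    using assms(5,6,10) unfolding consistent_def distribution_on_def
    by (intro mult_nonneg_nonneg sum_nonneg) (auto intro: pseudometric_on_nonneg)
  show "(\<Sum>Y\<in>A. wplus N w Y * d (Inr X) (Inr Y)) \<le> 2 * SC N d X"
    using assms(2,4,5,6,7) by (rule weighted_dist_le_twice_SC)
  have "Min (SC N d ` A) \<in> SC N d ` A"
    using assms(2,3) by simp
  then show "0 \<le> Min (SC N d ` A)"
    using SC_nonneg[OF assms(5)] by auto
qed (use assms(8,9) in auto)

end
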